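(* Let $P$ be a poset, let $\alpha\ge2$ be a cardinal, and let $\mathcal{U}$ be a join-specification for $P$ with $\mathcal{U}\subseteq\mathcal{U}_\alpha\subseteq\mathcal{U}^+$. Suppose that for all $p\in P$ and $T\in\mathcal{U}$, whenever $p\wedge\bigvee T$ is defined in $P$, the join $\bigvee_{t\in T}(p\wedge t)$ is also defined in $P$ and $p\wedge\bigvee T=\bigvee_{t\in T}(p\wedge t)$. Then $\mathcal{I}_{\mathcal{U}}$ is a frame.
   Context: A join-specification for $P$ is a set $\mathcal{U}\subseteq\wp(P)$ such that $\bigvee S$ exists in $P$ for every $S\in\mathcal{U}$ and $\{p\}\in\mathcal{U}$ for every $p\in P$. A $\mathcal{U}$-ideal is a down-closed $C\subseteq P$ with $\bigvee S\in C$ whenever $S\in\mathcal{U}$, $S\subseteq C$; $\mathcal{I}_{\mathcal{U}}$ is the complete lattice of $\mathcal{U}$-ideals under inclusion; $\Gamma_{\mathcal{U}}(S)$ is the smallest $\mathcal{U}$-ideal containing $S$. $\mathcal{U}^+=\{S\subseteq P:\bigvee S\text{ exists and }\bigvee S\in\Gamma_{\mathcal{U}}(S)\}$. $\mathcal{U}_\alpha=\{S\subseteq P:S\neq\emptyset,\ |S|<\alpha,\ \bigvee S\text{ exists in }P\}$. *)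

theory Defs
  imports Main
begin

text \<open>The poset P is the universe of a type of class order.\<close>

definition is_join :: "'a::order set \<Rightarrow> 'a \<Rightarrow> bool" where
  "is_join S x \<longleftrightarrow> (\<forall>s\<in>S. s \<le> x) \<and> (\<forall>y. (\<forall>s\<in>S. s \<le> y) \<longrightarrow> x \<le> y)"

definition has_join :: "'a::order set \<Rightarrow> bool" where
  "has_join S \<longleftrightarrow> (\<exists>x. is_join S x)"

definition join :: "'a::order set \<Rightarrow> 'a" where
  "join S = (THE x. is_join S x)"

definition is_meet2 :: "'a::order \<Rightarrow> 'a \<Rightarrow> 'a \<Rightarrow> bool" where
  "is_meet2 p q x \<longleftrightarrow> x \<le> p \<and> x \<le> q \<and> (\<forall>y. y \<le> p \<and> y \<le> q \<longrightarrow> y \<le> x)"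

definition has_meet2 :: "'a::order \<Rightarrow> 'a \<Rightarrow> bool" where
  "has_meet2 p q \<longleftrightarrow> (\<exists>x. is_meet2 p q x)"

definition meet2 :: "'a::order \<Rightarrow> 'a \<Rightarrow> 'a" where
  "meet2 p q = (THE x. is_meet2 p q x)"

definition join_spec :: "'a::order set set \<Rightarrow> bool" where
  "join_spec U \<longleftrightarrow> (\<forall>S\<in>U. has_join S) \<and> (\<forall>p. {p} \<in> U)"

definition U_ideal :: "'a::order set set \<Rightarrow> 'a set \<Rightarrow> bool" where
  "U_ideal U C \<longleftrightarrow> (\<forall>x y. x \<in> C \<longrightarrow> y \<le> x \<longrightarrow> y \<in> C) \<and>
                    (\<forall>S\<in>U. S \<subseteq> C \<longrightarrow> join S \<in> C)"

definition U_ideals :: "'a::order set set \<Rightarrow> 'a set set" where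
  "U_ideals U = {C. U_ideal U C}"

definition Gamma :: "'a::order set set \<Rightarrow> 'a set \<Rightarrow> 'a set" where
  "Gamma U S = \<Inter>{C. U_ideal U C \<and> S \<subseteq> C}"

definition U_plus :: "'a::order set set \<Rightarrow> 'a set set" where
  "U_plus U = {S. has_join S \<and> join S \<in> Gamma U S}"

text \<open>The cardinal alpha is represented by a cardinal order relation; |S| < alpha.\<close>
definition U_alpha :: "'b rel \<Rightarrow> 'a::order set set" where
  "U_alpha alpha = {S. S \<noteq> {} \<and> (card_of S, alpha) \<in> ordLess \<and> has_join S}"

definition lub_in :: "'x set \<Rightarrow> ('x \<Rightarrow> 'x \<Rightarrow> bool) \<Rightarrow> 'x set \<Rightarrow> 'x \<Rightarrow> bool" where
  "lub_in L le F x \<longleftrightarrow> x \<in> L \<and> (\<forall>y\<in>F. le y x) \<and> (\<forall>z\<in>L. (\<forall>y\<in>F. le y z) \<longrightarrow> le x z)"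

definition glb_in :: "'x set \<Rightarrow> ('x \<Rightarrow> 'x \<Rightarrow> bool) \<Rightarrow> 'x set \<Rightarrow> 'x \<Rightarrow> bool" where
  "glb_in L le F x \<longleftrightarrow> x \<in> L \<and> (\<forall>y\<in>F. le x y) \<and> (\<forall>z\<in>L. (\<forall>y\<in>F. le z y) \<longrightarrow> le z x)"

definition lub_of :: "'x set \<Rightarrow> ('x \<Rightarrow> 'x \<Rightarrow> bool) \<Rightarrow> 'x set \<Rightarrow> 'x" where
  "lub_of L le F = (THE x. lub_in L le F x)"

definition glb_of :: "'x set \<Rightarrow> ('x \<Rightarrow> 'x \<Rightarrow> bool) \<Rightarrow> 'x set \<Rightarrow> 'x" where
  "glb_of L le F = (THE x. glb_in L le F x)"

definition frame :: "'x set \<Rightarrow> ('x \<Rightarrow> 'x \<Rightarrow> bool) \<Rightarrow> bool" where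
  "frame L le \<longleftrightarrow>
     (\<forall>a\<in>L. le a a) \<and>
     (\<forall>a\<in>L. \<forall>b\<in>L. \<forall>c\<in>L. le a b \<longrightarrow> le b c \<longrightarrow> le a c) \<and>
     (\<forall>a\<in>L. \<forall>b\<in>L. le a b \<longrightarrow> le b a \<longrightarrow> a = b) \<and>
     (\<forall>F. F \<subseteq> L \<longrightarrow> (\<exists>x. lub_in L le F x)) \<and>
     (\<forall>a\<in>L. \<forall>F. F \<subseteq> L \<longrightarrow>
        glb_of L le {a, lub_of L le F} = lub_of L le ((\<lambda>b. glb_of L le {a, b}) ` F))"

end

theory Submission
  imports Defs
begin

text \<open>
  The \<open>\<U>\<close>-ideals form a complete lattice (meets are intersections, joins are
  \<open>\<Gamma>\<^sub>\<U>\<close> of unions), so it suffices to produce Heyting implications: for \<open>\<U>\<close>-ideals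
  \<open>A\<close>, \<open>J\<close> the down-set \<open>A \<Rightarrow> J = {x. \<down>x \<inter> A \<subseteq> J}\<close> is again a \<open>\<U>\<close>-ideal.
  If \<open>S \<in> \<U>\<close>, \<open>S \<subseteq> A \<Rightarrow> J\<close> and \<open>y \<le> \<Squnion>S\<close> with \<open>y \<in> A\<close>, then by the distributive
  law \<open>y = y \<sqinter> \<Squnion>S = \<Squnion>\<^sub>t\<^sub>\<in>\<^sub>S (y \<sqinter> t)\<close>; the family \<open>{y \<sqinter> t}\<close> lies in \<open>J\<close> and has
  fewer than \<open>\<alpha>\<close> members, so it belongs to \<open>\<U>\<^sub>\<alpha> \<subseteq> \<U>\<^sup>+\<close> and its join lies in
  \<open>\<Gamma>\<^sub>\<U>\<close> of the family, hence in \<open>J\<close>.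
\<close>

lemma U_ideal_Inter: "(\<And>C. C \<in> K \<Longrightarrow> U_ideal U C) \<Longrightarrow> U_ideal U (\<Inter>K)"
  unfolding U_ideal_def by blast

lemma U_ideal_Int: "U_ideal U A \<Longrightarrow> U_ideal U B \<Longrightarrow> U_ideal U (A \<inter> B)"
  using U_ideal_Inter[of "{A, B}" U] by auto

lemma U_ideal_Gamma: "U_ideal U (Gamma U S)"
  unfolding Gamma_def by (rule U_ideal_Inter) auto

lemma Gamma_superset: "S \<subseteq> Gamma U S"
  unfolding Gamma_def by auto

lemma Gamma_least: "U_ideal U C \<Longrightarrow> S \<subseteq> C \<Longrightarrow> Gamma U S \<subseteq> C"
  unfolding Gamma_def by auto

lemma Gamma_mono: "S \<subseteq> T \<Longrightarrow> Gamma U S \<subseteq> Gamma U T"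
  by (meson Gamma_least Gamma_superset U_ideal_Gamma order_trans)

lemma lub_of_eq:
  assumes antisym: "\<And>a b. a \<in> L \<Longrightarrow> b \<in> L \<Longrightarrow> le a b \<Longrightarrow> le b a \<Longrightarrow> a = b"
    and "lub_in L le F x"
  shows "lub_of L le F = x"
  unfolding lub_of_def
  by (rule the_equality) (use assms in \<open>auto simp: lub_in_def\<close>)

lemma glb_of_eq:
  assumes antisym: "\<And>a b. a \<in> L \<Longrightarrow> b \<in> L \<Longrightarrow> le a b \<Longrightarrow> le b a \<Longrightarrow> a = b"
    and "glb_in L le F x"
  shows "glb_of L le F = x"
  unfolding glb_of_def
  by (rule the_equality) (use assms in \<open>auto simp: glb_in_def\<close>)

lemma lub_in_U_ideals:
  "lub_in (U_ideals U) (\<subseteq>) F (Gamma U (\<Union>F))"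
  unfolding lub_in_def U_ideals_def
  using U_ideal_Gamma[of U "\<Union>F"] Gamma_superset[of "\<Union>F" U] Gamma_least[of U _ "\<Union>F"]
  by (simp add: Sup_le_iff)

lemma lub_of_U_ideals:
  "lub_of (U_ideals U) (\<subseteq>) F = Gamma U (\<Union>F)"
  by (rule lub_of_eq[OF _ lub_in_U_ideals]) auto

lemma glb_of_U_ideals:
  assumes "A \<in> U_ideals U" and "B \<in> U_ideals U"
  shows "glb_of (U_ideals U) (\<subseteq>) {A, B} = A \<inter> B"
proof (rule glb_of_eq)
  show "glb_in (U_ideals U) (\<subseteq>) {A, B} (A \<inter> B)"
    using assms U_ideal_Int unfolding glb_in_def U_ideals_def by auto
qed auto

definition ideal_implication :: "'a::order set \<Rightarrow> 'a set \<Rightarrow> 'a set" where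
  "ideal_implication A J = {x. \<forall>y\<le>x. y \<in> A \<longrightarrow> y \<in> J}"

lemma Int_Gamma_Union:
  assumes imp: "\<And>J. U_ideal U J \<Longrightarrow> U_ideal U (ideal_implication A J)"
    and A: "U_ideal U A" and F: "\<And>B. B \<in> F \<Longrightarrow> U_ideal U B"
  shows "A \<inter> Gamma U (\<Union>F) = Gamma U (\<Union>B\<in>F. A \<inter> B)"
proof
  let ?J = "Gamma U (\<Union>B\<in>F. A \<inter> B)"
  have "\<Union>F \<subseteq> ideal_implication A ?J"
    using F Gamma_superset[of "\<Union>B\<in>F. A \<inter> B" U]
    unfolding ideal_implication_def U_ideal_def by blast
  then have "Gamma U (\<Union>F) \<subseteq> ideal_implication A ?J"
    using imp[OF U_ideal_Gamma] by (rule Gamma_least[rotated])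
  then show "A \<inter> Gamma U (\<Union>F) \<subseteq> ?J"
    unfolding ideal_implication_def by blast
  show "?J \<subseteq> A \<inter> Gamma U (\<Union>F)"
    using Gamma_least[OF A, of "\<Union>B\<in>F. A \<inter> B"] Gamma_mono[of "\<Union>B\<in>F. A \<inter> B" "\<Union>F" U]
    by blast
qed

lemma frame_U_ideals_if_implication:
  assumes "\<And>A J. U_ideal U A \<Longrightarrow> U_ideal U J \<Longrightarrow> U_ideal U (ideal_implication A J)"
  shows "frame (U_ideals U) (\<subseteq>)"
  unfolding frame_def
proof (intro conjI ballI allI impI)
  fix F assume "F \<subseteq> U_ideals U"
  then show "\<exists>x. lub_in (U_ideals U) (\<subseteq>) F x"
    using lub_in_U_ideals by blast
next
  fix A F assume A: "A \<in> U_ideals U" and F: "F \<subseteq> U_ideals U"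
  have "glb_of (U_ideals U) (\<subseteq>) {A, lub_of (U_ideals U) (\<subseteq>) F} = A \<inter> Gamma U (\<Union>F)"
    unfolding lub_of_U_ideals
    by (rule glb_of_U_ideals[OF A]) (simp add: U_ideals_def U_ideal_Gamma)
  also have "\<dots> = Gamma U (\<Union>B\<in>F. A \<inter> B)"
    by (rule Int_Gamma_Union) (use A F assms in \<open>auto simp: U_ideals_def\<close>)
  also have "\<dots> = lub_of (U_ideals U) (\<subseteq>) ((\<lambda>B. A \<inter> B) ` F)"
    by (simp add: lub_of_U_ideals)
  also have "(\<lambda>B. A \<inter> B) ` F = (\<lambda>B. glb_of (U_ideals U) (\<subseteq>) {A, B}) ` F"
    using A F glb_of_U_ideals by (intro image_cong) blast+
  finally show "glb_of (U_ideals U) (\<subseteq>) {A, lub_of (U_ideals U) (\<subseteq>) F} =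
      lub_of (U_ideals U) (\<subseteq>) ((\<lambda>B. glb_of (U_ideals U) (\<subseteq>) {A, B}) ` F)" .
qed auto

lemma meet2_eq: "is_meet2 p q x \<Longrightarrow> meet2 p q = x"
  unfolding meet2_def
  by (rule the_equality) (auto simp: is_meet2_def intro: order.antisym)

lemma meet2_le:
  assumes "has_meet2 p q"
  shows "meet2 p q \<le> p" and "meet2 p q \<le> q"
  using assms meet2_eq unfolding has_meet2_def is_meet2_def by blast+

lemma is_meet2_of_le: "p \<le> q \<Longrightarrow> is_meet2 p q p"
  by (simp add: is_meet2_def)

lemma image_in_U_alpha:
  "S \<in> U_alpha alpha \<Longrightarrow> has_join (f ` S) \<Longrightarrow> f ` S \<in> U_alpha alpha"
  unfolding U_alpha_def using card_of_image ordLeq_ordLess_trans by blast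

lemma U_ideal_ideal_implication:
  assumes dist: "\<And>p T. T \<in> U \<Longrightarrow> has_meet2 p (join T) \<Longrightarrow>
           (\<forall>t\<in>T. has_meet2 p t) \<and> has_join ((\<lambda>t. meet2 p t) ` T) \<and>
           meet2 p (join T) = join ((\<lambda>t. meet2 p t) ` T)"
    and plus: "\<And>p T. T \<in> U \<Longrightarrow> has_join ((\<lambda>t. meet2 p t) ` T) \<Longrightarrow>
           (\<lambda>t. meet2 p t) ` T \<in> U_plus U"
    and A: "U_ideal U A" and J: "U_ideal U J"
  shows "U_ideal U (ideal_implication A J)"
  unfolding U_ideal_def
proof (intro conjI allI impI ballI)
  fix x y assume "x \<in> ideal_implication A J" "y \<le> x"
  then show "y \<in> ideal_implication A J"
    unfolding ideal_implication_def using order_trans by blast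
next
  fix S assume S: "S \<in> U" and S_imp: "S \<subseteq> ideal_implication A J"
  show "join S \<in> ideal_implication A J"
    unfolding ideal_implication_def
  proof (intro CollectI allI impI)
    fix y assume y: "y \<le> join S" "y \<in> A"
    let ?M = "(\<lambda>t. meet2 y t) ` S"
    have "has_meet2 y (join S)" and y_eq: "meet2 y (join S) = y"
      using is_meet2_of_le[OF y(1)] meet2_eq unfolding has_meet2_def by blast+
    with dist[OF S] have meets: "\<forall>t\<in>S. has_meet2 y t" and "has_join ?M"
      and y_join: "y = join ?M" by auto
    have "?M \<subseteq> J"
    proof
      fix m assume "m \<in> ?M"
      then obtain t where t: "t \<in> S" "m = meet2 y t" by blast
      with meets have "m \<le> y" "m \<le> t" using meet2_le by blast+
      with y(2) A t(1) S_imp show "m \<in> J"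
        unfolding U_ideal_def ideal_implication_def by blast
    qed
    have "join ?M \<in> Gamma U ?M"
      using plus[OF S \<open>has_join ?M\<close>] by (simp add: U_plus_def)
    also have "\<dots> \<subseteq> J" using J \<open>?M \<subseteq> J\<close> by (rule Gamma_least)
    finally show "y \<in> J" using y_join by simp
  qed
qed

theorem lemma3p13:
  fixes U :: "'a::order set set" and alpha :: "'b rel"
  assumes "Card_order alpha"
    and "(card_of (UNIV :: bool set), alpha) \<in> ordLeq"
    and "join_spec U"
    and "U \<subseteq> U_alpha alpha"
    and "U_alpha alpha \<subseteq> U_plus U"
    and "\<And>p T. T \<in> U \<Longrightarrow> has_meet2 p (join T) \<Longrightarrow>
           (\<forall>t\<in>T. has_meet2 p t) \<and> has_join ((\<lambda>t. meet2 p t) ` T) \<and>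
           meet2 p (join T) = join ((\<lambda>t. meet2 p t) ` T)"
  shows "frame (U_ideals U) (\<subseteq>)"
proof (rule frame_U_ideals_if_implication)
  fix A J assume A: "U_ideal U A" and J: "U_ideal U J"
  have plus: "(\<lambda>t. meet2 p t) ` T \<in> U_plus U"
    if "T \<in> U" and "has_join ((\<lambda>t. meet2 p t) ` T)" for p T
    using that image_in_U_alpha assms(4,5) by blast
  show "U_ideal U (ideal_implication A J)"
    by (rule U_ideal_ideal_implication[OF assms(6) plus A J])
qed

end
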